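(* Let $k\ge 3$ and $m\ge 2$ be integers and let $\mu>0$. Then there exists $n_0$ such that for every $n\ge n_0$ there exists a $(\frac12,\mu)$-dense $k$-partite $k$-graph $H$, each of whose parts has exactly $n$ vertices, such that $\delta'_{k-1}(H)\ge(\frac12-\mu)n$ and $H$ has no $K_k(m)$-factor.
   Context: A $k$-graph $H$ has a vertex set $V(H)$ and an edge set $E(H)$ consisting of $k$-element subsets of $V(H)$. A $k$-partite $k$-graph comes with a fixed partition $V(H)=V_1\cup\dots\cup V_k$ (its parts) such that every edge meets each $V_i$ in at most one vertex. A set $S\subseteq V(H)$ is legal if $|S\cap V_i|\le 1$ for all $i$. For $S\subseteq V(H)$ with $|S|=s<k$, $\deg_H(S)$ is the number of $(k-s)$-sets $S'$ with $S\cup S'\in E(H)$. The partite minimum $s$-degree $\delta'_s(H)$ is the minimum of $\deg_H(S)$ over all legal $s$-subsets $S$. A $k$-partite $k$-graph $H$ with parts $V_1,\dots,V_k$ and $N=|V(H)|$ vertices is $(p,\mu)$-dense if for all $X_1\subseteq V_1,\dots,X_k\subseteq V_k$ we have $e_H(X_1,\dots,X_k)\ge p|X_1|\cdots|X_k|-\mu N^k$, where $e_H(X_1,\dots,X_k)$ is the number of $(x_1,\dots,x_k)\in X_1\times\dots\times X_k$ with $\{x_1,\dots,x_k\}\in E(H)$. $K_k(m)$ denotes the complete $k$-partite $k$-graph with each part of size $m$. An $F$-factor in $H$ is a set of pairwise vertex-disjoint subgraphs of $H$, each isomorphic to $F$, covering $V(H)$. *)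

theory Defs
  imports Complex_Main "HOL-Library.FuncSet"
begin

definition verts :: "nat \<Rightarrow> (nat \<Rightarrow> 'a set) \<Rightarrow> 'a set" where
  "verts k V = (\<Union>i<k. V i)"

definition kpartite_kgraph :: "nat \<Rightarrow> (nat \<Rightarrow> 'a set) \<Rightarrow> 'a set set \<Rightarrow> bool" where
  "kpartite_kgraph k V E \<longleftrightarrow>
     (\<forall>i<k. finite (V i)) \<and>
     (\<forall>i<k. \<forall>j<k. i \<noteq> j \<longrightarrow> V i \<inter> V j = {}) \<and>
     (\<forall>e\<in>E. e \<subseteq> verts k V \<and> card e = k \<and> (\<forall>i<k. card (e \<inter> V i) \<le> 1))"

definition legal :: "nat \<Rightarrow> (nat \<Rightarrow> 'a set) \<Rightarrow> 'a set \<Rightarrow> bool" where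
  "legal k V S \<longleftrightarrow> (\<forall>i<k. card (S \<inter> V i) \<le> 1)"

definition deg :: "nat \<Rightarrow> 'a set set \<Rightarrow> 'a set \<Rightarrow> nat" where
  "deg k E S = card {S'. card S' = k - card S \<and> S \<union> S' \<in> E}"

definition partite_min_deg :: "nat \<Rightarrow> (nat \<Rightarrow> 'a set) \<Rightarrow> 'a set set \<Rightarrow> nat \<Rightarrow> nat" where
  "partite_min_deg k V E s =
     Min {deg k E S | S. S \<subseteq> verts k V \<and> legal k V S \<and> card S = s}"

definition e_count :: "nat \<Rightarrow> 'a set set \<Rightarrow> (nat \<Rightarrow> 'a set) \<Rightarrow> nat" where
  "e_count k E X = card {f \<in> PiE {..<k} X. f ` {..<k} \<in> E}"

definition dense :: "nat \<Rightarrow> (nat \<Rightarrow> 'a set) \<Rightarrow> 'a set set \<Rightarrow> real \<Rightarrow> real \<Rightarrow> bool" where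
  "dense k V E p \<mu> \<longleftrightarrow>
     (\<forall>X. (\<forall>i<k. X i \<subseteq> V i) \<longrightarrow>
        real (e_count k E X) \<ge> p * (\<Prod>i<k. real (card (X i))) - \<mu> * real (card (verts k V)) ^ k)"

definition Kk_verts :: "nat \<Rightarrow> nat \<Rightarrow> (nat \<times> nat) set" where
  "Kk_verts k m = {..<k} \<times> {..<m}"

definition Kk_edges :: "nat \<Rightarrow> nat \<Rightarrow> (nat \<times> nat) set set" where
  "Kk_edges k m = {(\<lambda>i. (i, g i)) ` {..<k} | g. g \<in> {..<k} \<rightarrow> {..<m}}"

definition Kk_copy :: "nat \<Rightarrow> nat \<Rightarrow> (nat \<Rightarrow> 'a set) \<Rightarrow> 'a set set \<Rightarrow> 'a set \<Rightarrow> 'a set set \<Rightarrow> bool" where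
  "Kk_copy k m V E W F \<longleftrightarrow>
     W \<subseteq> verts k V \<and> F \<subseteq> E \<and> (\<forall>e\<in>F. e \<subseteq> W) \<and>
     (\<exists>\<phi>. bij_betw \<phi> (Kk_verts k m) W \<and>
          (\<forall>e. e \<subseteq> Kk_verts k m \<longrightarrow> (e \<in> Kk_edges k m \<longleftrightarrow> \<phi> ` e \<in> F)))"

definition has_Kk_factor :: "nat \<Rightarrow> nat \<Rightarrow> (nat \<Rightarrow> 'a set) \<Rightarrow> 'a set set \<Rightarrow> bool" where
  "has_Kk_factor k m V E \<longleftrightarrow>
     (\<exists>\<F>. (\<forall>(W,F)\<in>\<F>. Kk_copy k m V E W F) \<and>
          (\<forall>A\<in>\<F>. \<forall>B\<in>\<F>. A \<noteq> B \<longrightarrow> fst A \<inter> fst B = {}) \<and>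
          (\<Union>A\<in>\<F>. fst A) = verts k V)"

end

theory Submission
  imports Defs "HOL-Analysis.Convex" "HOL-Library.Disjoint_Sets"
begin

(*
  Take k parts of n vertices and let a transversal be an edge iff its sign is +1, where the sign
  is an entry of a 2^t x 2^t Sylvester-Hadamard matrix indexed by labels of its vertices in parts
  1 and 2, times vertex signs of its other vertices; the first b vertices of each part are
  negative. By Lindsey's lemma the Hadamard factor is balanced up to mu n^2 on every box, so the
  graph is (1/2, mu)-dense. Fixing k - 1 vertices, the sign of the completed edge is a vertex
  sign or a Hadamard row in the missing vertex, and both are balanced up to mu n; this gives the
  codegree bound. Finally, exchanging the part-0 vertex of an edge keeps it an edge only if the
  vertex sign is unchanged, so every copy of K_k(m) meets the b negative vertices of part 0 in a
  multiple of m vertices, and no K_k(m)-factor exists when m does not divide b.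
*)

lemma card_pm_one_level:
  fixes h :: "'a \<Rightarrow> real"
  assumes "finite A" and "\<And>x. x \<in> A \<Longrightarrow> \<bar>h x\<bar> = 1" and "\<bar>s\<bar> = 1"
  shows "2 * real (card {x\<in>A. h x = s}) = real (card A) + s * (\<Sum>x\<in>A. h x)"
  using assms
proof (induction A rule: finite_induct)
  case (insert a A)
  have "{x \<in> insert a A. h x = s} = (if h a = s then insert a {x\<in>A. h x = s} else {x\<in>A. h x = s})"
    by auto
  moreover have "h a = 1 \<or> h a = -1" "s = 1 \<or> s = -1"
    using insert.prems(1)[of a] insert.prems(2) by (auto simp: abs_eq_iff)
  ultimately show ?case
    using insert by (auto simp: algebra_simps card_insert_if)
qed simp

lemma card_pm_one_level_ge:
  fixes h :: "'a \<Rightarrow> real"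
  assumes "finite A" and "\<And>x. x \<in> A \<Longrightarrow> \<bar>h x\<bar> = 1" and "\<bar>s\<bar> = 1"
    and "\<bar>\<Sum>x\<in>A. h x\<bar> \<le> 2 * \<mu> * real (card A)"
  shows "(1/2 - \<mu>) * real (card A) \<le> real (card {x\<in>A. h x = s})"
proof -
  have "\<bar>s * (\<Sum>x\<in>A. h x)\<bar> \<le> 2 * \<mu> * real (card A)"
    using assms(3,4) by (simp add: abs_mult)
  then show ?thesis
    using card_pm_one_level[OF assms(1-3)] by (simp add: algebra_simps abs_le_iff)
qed

lemma sum_comp_eq_sum_card_fibres:
  fixes G :: "'b \<Rightarrow> real"
  assumes "finite A" and "finite T" and "f ` A \<subseteq> T"
  shows "(\<Sum>a\<in>A. G (f a)) = (\<Sum>x\<in>T. real (card {a\<in>A. f a = x}) * G x)"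
proof -
  have "(\<Sum>a\<in>A. G (f a)) = (\<Sum>x\<in>T. \<Sum>a\<in>{a\<in>A. f a = x}. G (f a))"
    using sum.group[OF assms, of "\<lambda>a. G (f a)"] by simp
  also have "\<dots> = (\<Sum>x\<in>T. real (card {a\<in>A. f a = x}) * G x)"
    by (intro sum.cong refl) simp
  finally show ?thesis .
qed

lemma sum_PiE_insert:
  assumes "i \<notin> I"
  shows "(\<Sum>f\<in>PiE (insert i I) X. G f) = (\<Sum>a\<in>X i. \<Sum>g\<in>PiE I X. G (g(i := a)))"
proof -
  have "(\<Sum>f\<in>PiE (insert i I) X. G f) = (\<Sum>(a, g)\<in>X i \<times> PiE I X. G (g(i := a)))"
    unfolding PiE_insert_eq by (subst sum.reindex[OF inj_combinator[OF assms]]) (simp add: case_prod_beta)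
  then show ?thesis by (simp add: sum.cartesian_product)
qed

lemma dvd_card_of_partition:
  assumes "finite U" and "\<Union>\<W> = U" and "pairwise disjnt \<W>" and "B \<subseteq> U"
    and "\<And>W. W \<in> \<W> \<Longrightarrow> (m::nat) dvd card (W \<inter> B)"
  shows "m dvd card B"
proof -
  have fin: "finite \<W>"
    using assms(1,2) by (metis finite_UnionD)
  have "B = (\<Union>W\<in>\<W>. W \<inter> B)"
    using assms(2,4) by blast
  also have "card \<dots> = (\<Sum>W\<in>\<W>. card (W \<inter> B))"
    using assms(1-3) fin
    by (intro card_UN_disjoint) (auto simp: pairwise_def disjnt_def intro: finite_subset)
  finally have "card B = (\<Sum>W\<in>\<W>. card (W \<inter> B))" .
  then show ?thesis
    by (simp add: assms(5) dvd_sum)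
qed

section \<open>Transversals of partite set systems\<close>

lemma transversal_image_Int:
  assumes "disjoint_family_on V I" and "f \<in> PiE I V" and "i \<in> I"
  shows "f ` I \<inter> V i = {f i}"
  using assms by (fastforce simp: disjoint_family_on_def PiE_iff)

lemma transversal_inj_on:
  assumes "disjoint_family_on V I" and "f \<in> PiE I V"
  shows "inj_on f I"
proof (rule inj_onI)
  fix i j assume "i \<in> I" "j \<in> I" "f i = f j"
  then show "i = j"
    using assms by (metis PiE_mem disjoint_family_onD disjoint_iff)
qed

lemma transversal_eq_of_image_eq:
  assumes "disjoint_family_on V I" and "f \<in> PiE I V" and "g \<in> PiE I V" and "f ` I = g ` I"
  shows "f = g"
proof (rule PiE_ext[OF assms(2,3)])
  fix i assume "i \<in> I"
  then have "{f i} = {g i}"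
    using transversal_image_Int[OF assms(1)] assms(2-4) by metis
  then show "f i = g i" by simp
qed

lemma transversal_exchange:
  assumes "disjoint_family_on V I" and "f \<in> PiE I V" and "f' \<in> PiE I V" and "i0 \<in> I"
    and "f' ` I = insert u' (f ` I - {f i0})"
  shows "f' = f(i0 := u')"
proof -
  have same: "f' i = f i" if "i \<in> I" "i \<noteq> i0" for i
  proof -
    have "f i \<noteq> f i0"
      using inj_onD[OF transversal_inj_on[OF assms(1,2)]] that assms(4) by blast
    then have "f i \<in> f' ` I \<inter> V i"
      using assms(2,5) that by (auto simp: PiE_iff)
    then show ?thesis
      using transversal_image_Int[OF assms(1,3) that(1)] by auto
  qed
  have "f' i0 \<notin> f ` I - {f i0}"
  proof
    assume "f' i0 \<in> f ` I - {f i0}"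
    then obtain i where i: "i \<in> I" "i \<noteq> i0" "f' i0 = f i"
      by auto
    then have "f' i0 = f' i"
      using same by simp
    then have "i0 = i"
      by (rule inj_onD[OF transversal_inj_on[OF assms(1,3)]]) (use assms(4) i in auto)
    then show False
      using i by simp
  qed
  then have "f' i0 = u'"
    using assms(4,5) by blast
  show ?thesis
  proof
    fix i show "f' i = (f(i0 := u')) i"
      using same[of i] \<open>f' i0 = u'\<close> assms(2-4) by (cases "i \<in> I") (auto simp: PiE_def extensional_def)
  qed
qed

lemma transversal_minus_one_legal:
  assumes "disjoint_family_on V {..<k}" and "g \<in> PiE {..<k} V" and "j < k"
  shows "g ` ({..<k} - {j}) \<subseteq> verts k V" "legal k V (g ` ({..<k} - {j}))"
    "card (g ` ({..<k} - {j})) = k - 1"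
proof -
  show "g ` ({..<k} - {j}) \<subseteq> verts k V"
    using assms(2) by (auto simp: verts_def PiE_iff)
  show "legal k V (g ` ({..<k} - {j}))"
    unfolding legal_def
  proof (intro allI impI)
    fix i assume "i < k"
    then have "g ` ({..<k} - {j}) \<inter> V i \<subseteq> {g i}"
      using transversal_image_Int[OF assms(1,2)] by auto
    then show "card (g ` ({..<k} - {j}) \<inter> V i) \<le> 1"
      using card_mono[of "{g i}"] by fastforce
  qed
  have "inj_on g ({..<k} - {j})"
    using transversal_inj_on[OF assms(1,2)] by (rule inj_on_subset) auto
  then show "card (g ` ({..<k} - {j})) = k - 1"
    using assms(3) by (simp add: card_image)
qed

lemma legal_card_eq_card_parts_met:
  assumes "disjoint_family_on V {..<k}" and "\<And>i. i < k \<Longrightarrow> finite (V i)"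
    and "S \<subseteq> verts k V" and "legal k V S"
  shows "card S = card {i\<in>{..<k}. S \<inter> V i \<noteq> {}}"
proof -
  define Z where "Z = {i\<in>{..<k}. S \<inter> V i \<noteq> {}}"
  have fS: "finite S"
    using assms(2,3) by (auto simp: verts_def intro: finite_subset)
  have card_part: "card (S \<inter> V i) = (if i \<in> Z then 1 else 0)" if "i < k" for i
    using assms(4) that fS by (auto simp: legal_def Z_def le_Suc_eq)
  have "S = (\<Union>i<k. S \<inter> V i)"
    using assms(3) by (auto simp: verts_def)
  also have "card \<dots> = (\<Sum>i<k. card (S \<inter> V i))"
    using fS assms(1) by (intro card_UN_disjoint) (auto simp: disjoint_family_on_def)
  also have "\<dots> = card ({..<k} \<inter> Z)"
    by (simp add: card_part sum.If_cases)
  also have "{..<k} \<inter> Z = Z"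
    by (auto simp: Z_def)
  finally show ?thesis
    by (simp add: Z_def)
qed

lemma legal_card_minus_one_transversalE:
  assumes "disjoint_family_on V {..<k}" and "\<And>i. i < k \<Longrightarrow> finite (V i) \<and> V i \<noteq> {}"
    and "S \<subseteq> verts k V" and "legal k V S" and "card S = k - 1" and "0 < k"
  obtains j g where "j < k" "g \<in> PiE {..<k} V" "S = g ` ({..<k} - {j})"
proof -
  define Z where "Z = {i\<in>{..<k}. S \<inter> V i \<noteq> {}}"
  have "card Z = k - 1"
    using legal_card_eq_card_parts_met[OF assms(1) _ assms(3,4)] assms(2,5) by (simp add: Z_def)
  then have "Z \<noteq> {..<k}"
    using assms(6) by auto
  then obtain j where j: "j < k" "j \<notin> Z"
    by (auto simp: Z_def)
  have "Z = {..<k} - {j}"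
    using j \<open>card Z = k - 1\<close> by (intro card_subset_eq) (auto simp: Z_def)
  then have "S \<inter> V i \<noteq> {} \<and> card (S \<inter> V i) \<le> 1 \<and> finite (S \<inter> V i)" if "i < k" "i \<noteq> j" for i
    using that assms(2,4) by (auto simp: Z_def legal_def)
  then have single: "\<exists>x. S \<inter> V i = {x}" if "i < k" "i \<noteq> j" for i
    using that by (metis card_1_singleton_iff card_0_eq le_Suc_eq le_zero_eq One_nat_def)
  have "\<forall>i\<in>{..<k}. \<exists>x. x \<in> V i \<and> (i \<noteq> j \<longrightarrow> S \<inter> V i = {x})"
    using single assms(2) by (metis ex_in_conv insert_subset inf.cobounded2 lessThan_iff)
  then obtain g where g: "\<forall>i\<in>{..<k}. g i \<in> V i \<and> (i \<noteq> j \<longrightarrow> S \<inter> V i = {g i})"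
    by (rule bchoice[elim_format]) blast
  have "S = restrict g {..<k} ` ({..<k} - {j})"
  proof (intro subset_antisym subsetI)
    fix v assume "v \<in> S"
    then obtain i where "i < k" "v \<in> V i"
      using assms(3) by (auto simp: verts_def)
    moreover have "i \<noteq> j"
      using j \<open>v \<in> S\<close> calculation by (auto simp: Z_def)
    ultimately show "v \<in> restrict g {..<k} ` ({..<k} - {j})"
      using g \<open>v \<in> S\<close> by (auto intro!: image_eqI[of _ _ i])
  qed (use g in auto)
  moreover have "restrict g {..<k} \<in> PiE {..<k} V"
    using g by auto
  ultimately show ?thesis
    using that j(1) by blast
qed

lemma card_extensions_le_deg:
  assumes "finite (\<Union>E)" and "card S = k - 1" and "0 < k"
  shows "card {v\<in>A. insert v S \<in> E} \<le> deg k E S"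
proof -
  have "(\<lambda>v. {v}) ` {v\<in>A. insert v S \<in> E} \<subseteq> {S'. card S' = k - card S \<and> S \<union> S' \<in> E}"
    using assms(2,3) by auto
  moreover have "{S'. card S' = k - card S \<and> S \<union> S' \<in> E} \<subseteq> Pow (\<Union>E)"
    by blast
  ultimately have "card ((\<lambda>v. {v}) ` {v\<in>A. insert v S \<in> E}) \<le> deg k E S"
    unfolding deg_def using assms(1) by (intro card_mono) (auto intro: finite_subset)
  then show ?thesis
    by (simp add: card_image)
qed

lemma partite_min_deg_ge:
  assumes "finite (verts k V)" and "S0 \<subseteq> verts k V" "legal k V S0" "card S0 = s"
    and "\<And>S. S \<subseteq> verts k V \<Longrightarrow> legal k V S \<Longrightarrow> card S = s \<Longrightarrow> c \<le> real (deg k E S)"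
  shows "c \<le> real (partite_min_deg k V E s)"
proof -
  let ?D = "{deg k E S | S. S \<subseteq> verts k V \<and> legal k V S \<and> card S = s}"
  have "finite ?D"
    using assms(1) by (auto intro: finite_image_set)
  moreover have "?D \<noteq> {}"
    using assms(2-4) by blast
  ultimately have "Min ?D \<in> ?D"
    by (rule Min_in)
  then show ?thesis
    unfolding partite_min_deg_def using assms(5) by auto
qed

section \<open>Sylvester-Hadamard matrices\<close>

(* H_(t+1) = [[H_t, H_t], [H_t, -H_t]], with rows and columns indexed by x, y < 2^t. *)
fun sylvester :: "nat \<Rightarrow> nat \<Rightarrow> nat \<Rightarrow> real" where
  "sylvester 0 x y = 1"
| "sylvester (Suc t) x y =
     (if 2^t \<le> x \<and> 2^t \<le> y then -1 else 1) * sylvester t (x mod 2^t) (y mod 2^t)"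

lemma abs_sylvester [simp]: "\<bar>sylvester t x y\<bar> = 1"
  by (induction t arbitrary: x y) (auto simp: abs_mult)

lemma sylvester_commute: "sylvester t x y = sylvester t y x"
  by (induction t arbitrary: x y) auto

lemma sylvester_0_right [simp]: "sylvester t x 0 = 1"
  by (induction t arbitrary: x) auto

lemma sum_lessThan_two_power_Suc:
  fixes g :: "nat \<Rightarrow> real"
  shows "(\<Sum>x<2^Suc t. g x) = (\<Sum>x<2^t. g x) + (\<Sum>x<2^t. g (2^t + x))"
proof -
  have "{..<(2::nat)^Suc t} = {..<2^t} \<union> {2^t..<2^t + 2^t}"
    by auto
  then show ?thesis
    by (simp add: sum.union_disjoint sum.shift_bounds_nat_ivl[of g 0 "2^t" "2^t", simplified]
        add.commute lessThan_atLeast0)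
qed

lemma sylvester_orthogonal:
  assumes "y < 2^t" and "y' < 2^t"
  shows "(\<Sum>x<2^t. sylvester t x y * sylvester t x y') = (if y = y' then 2^t else 0)"
  using assms
proof (induction t arbitrary: y y')
  case (Suc t)
  define s :: "nat \<Rightarrow> real" where "s y = (if 2^t \<le> y then -1 else 1)" for y
  let ?S = "\<Sum>x<2^t. sylvester t x (y mod 2^t) * sylvester t x (y' mod 2^t)"
  have low: "sylvester (Suc t) x y = sylvester t x (y mod 2^t)" if "x < 2^t" for x y
    using that by simp
  have high: "sylvester (Suc t) (2^t + x) y = s y * sylvester t x (y mod 2^t)" if "x < 2^t" for x y
    using that by (simp add: s_def)
  have "(\<Sum>x<2^Suc t. sylvester (Suc t) x y * sylvester (Suc t) x y')
      = ?S + (\<Sum>x<2^t. s y * s y' * (sylvester t x (y mod 2^t) * sylvester t x (y' mod 2^t)))"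
    unfolding sum_lessThan_two_power_Suc
    by (intro arg_cong2[where f="(+)"] sum.cong) (simp_all del: sylvester.simps add: low high mult_ac)
  also have "\<dots> = (1 + s y * s y') * ?S"
    by (simp only: sum_distrib_left[symmetric]) (simp add: algebra_simps)
  also have "\<dots> = (1 + s y * s y') * (if y mod 2^t = y' mod 2^t then 2^t else 0)"
    by (simp add: Suc.IH)
  also have "\<dots> = (if y = y' then 2^Suc t else 0)"
  proof (cases "y mod 2^t = y' mod 2^t")
    case True
    have split: "z = (if 2^t \<le> z then 2^t + z mod 2^t else z mod 2^t)" if "z < 2^Suc t" for z :: nat
      using that by (auto simp: le_mod_geq)
    have "y = y' \<longleftrightarrow> (2^t \<le> y \<longleftrightarrow> 2^t \<le> y')"
    proof
      assume "2^t \<le> y \<longleftrightarrow> 2^t \<le> y'"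
      then show "y = y'"
        using split[OF Suc.prems(1)] split[OF Suc.prems(2)] True by metis
    qed simp
    then show ?thesis
      using True by (auto simp: s_def)
  qed auto
  finally show ?case .
qed simp

lemma sylvester_row_sum:
  assumes "y < 2^t" and "y \<noteq> 0"
  shows "(\<Sum>x<2^t. sylvester t x y) = 0"
  using sylvester_orthogonal[of y t 0] assms by simp

lemma sylvester_bilinear_bound:
  fixes a b :: "nat \<Rightarrow> real"
  shows "(\<Sum>x<2^t. \<Sum>y<2^t. a x * b y * sylvester t x y)\<^sup>2
    \<le> 2^t * (\<Sum>x<2^t. (a x)\<^sup>2) * (\<Sum>y<2^t. (b y)\<^sup>2)"
proof -
  define c where "c x = (\<Sum>y<2^t. b y * sylvester t x y)" for x
  have "(\<Sum>x<2^t. (c x)\<^sup>2)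
      = (\<Sum>x<2^t. \<Sum>y<2^t. \<Sum>y'<2^t. b y * b y' * (sylvester t x y * sylvester t x y'))"
  proof -
    have ac: "b y * h * (b y' * h') = b y * b y' * (h * h')" for y y' h h'
      by (simp add: mult_ac)
    show ?thesis
      by (simp only: c_def power2_eq_square sum_product ac)
  qed
  also have "\<dots> = (\<Sum>y<2^t. \<Sum>y'<2^t. \<Sum>x<2^t. b y * b y' * (sylvester t x y * sylvester t x y'))"
    by (subst sum.swap) (rule sum.cong[OF refl], rule sum.swap)
  also have "\<dots> = (\<Sum>y<2^t. \<Sum>y'<2^t. b y * b y' * (\<Sum>x<2^t. sylvester t x y * sylvester t x y'))"
    by (simp add: sum_distrib_left)
  also have "\<dots> = (\<Sum>y<2^t. \<Sum>y'<2^t. if y = y' then 2^t * (b y)\<^sup>2 else 0)"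
    by (intro sum.cong refl) (auto simp: sylvester_orthogonal power2_eq_square)
  also have "\<dots> = 2^t * (\<Sum>y<2^t. (b y)\<^sup>2)"
    by (simp add: sum_distrib_left)
  finally have c_sq: "(\<Sum>x<2^t. (c x)\<^sup>2) = 2^t * (\<Sum>y<2^t. (b y)\<^sup>2)" .
  have "(\<Sum>x<2^t. \<Sum>y<2^t. a x * b y * sylvester t x y) = (\<Sum>x<2^t. a x * c x)"
    by (simp add: c_def sum_distrib_left mult.assoc)
  also have "(\<dots>)\<^sup>2 \<le> (\<Sum>x<2^t. (a x)\<^sup>2) * (\<Sum>x<2^t. (c x)\<^sup>2)"
    by (rule Cauchy_Schwarz_ineq_sum)
  finally show ?thesis
    by (simp add: c_sq mult_ac)
qed

lemma sylvester_labelled_discrepancy: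
  fixes lab :: "'a \<Rightarrow> nat"
  assumes "finite X" "finite Y" and "lab ` (X \<union> Y) \<subseteq> {..<2^t}"
    and "\<And>x. card {u\<in>X. lab u = x} \<le> q" "\<And>y. card {w\<in>Y. lab w = y} \<le> q"
  shows "(\<Sum>u\<in>X. \<Sum>w\<in>Y. sylvester t (lab u) (lab w))\<^sup>2
    \<le> 2^t * (real q * real (card X)) * (real q * real (card Y))"
proof -
  define a where "a x = real (card {u\<in>X. lab u = x})" for x
  define b where "b y = real (card {w\<in>Y. lab w = y})" for y
  have group: "(\<Sum>u\<in>Z. G (lab u)) = (\<Sum>x<2^t. real (card {u\<in>Z. lab u = x}) * G x)"
    if "Z \<subseteq> X \<union> Y" for Z and G :: "nat \<Rightarrow> real"
    using that assms(1-3) by (intro sum_comp_eq_sum_card_fibres) (auto intro: finite_subset)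
  have sq_le: "(\<Sum>x<2^t. real (card {u\<in>Z. lab u = x})^2) \<le> real q * real (card Z)"
    if "Z \<subseteq> X \<union> Y" "\<And>x. card {u\<in>Z. lab u = x} \<le> q" for Z
  proof -
    have "(\<Sum>x<2^t. real (card {u\<in>Z. lab u = x})^2) \<le> (\<Sum>x<2^t. real q * real (card {u\<in>Z. lab u = x}))"
      using that(2) by (intro sum_mono) (simp add: power2_eq_square mult_right_mono)
    also have "\<dots> = real q * real (card Z)"
      using group[OF that(1), of "\<lambda>_. 1"] by (simp add: sum_distrib_left)
    finally show ?thesis .
  qed
  have "(\<Sum>u\<in>X. \<Sum>w\<in>Y. sylvester t (lab u) (lab w)) = (\<Sum>u\<in>X. \<Sum>y<2^t. b y * sylvester t (lab u) y)"
    unfolding b_def by (intro sum.cong refl group) auto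
  also have "\<dots> = (\<Sum>x<2^t. a x * (\<Sum>y<2^t. b y * sylvester t x y))"
    unfolding a_def by (intro group) auto
  also have "\<dots> = (\<Sum>x<2^t. \<Sum>y<2^t. a x * b y * sylvester t x y)"
    by (simp add: sum_distrib_left mult_ac)
  also have "(\<dots>)\<^sup>2 \<le> 2^t * (\<Sum>x<2^t. (a x)\<^sup>2) * (\<Sum>y<2^t. (b y)\<^sup>2)"
    by (rule sylvester_bilinear_bound)
  also have "\<dots> \<le> 2^t * (real q * real (card X)) * (real q * real (card Y))"
    unfolding a_def b_def using assms(4,5)
    by (intro mult_mono sq_le sum_nonneg) auto
  finally show ?thesis .
qed

definition cyclic_label :: "nat \<Rightarrow> nat \<Rightarrow> nat" where
  "cyclic_label d i = Suc (i mod d)"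

lemma sum_lessThan_mod:
  fixes w :: "nat \<Rightarrow> real"
  shows "(\<Sum>i<n. w (i mod d)) = real (n div d) * (\<Sum>x<d. w x) + (\<Sum>x<n mod d. w x)"
proof (cases "d = 0")
  case False
  define q r where "q = n div d" and "r = n mod d"
  have period: "(\<Sum>i\<in>{m*d..<m*d+x}. w (i mod d)) = (\<Sum>i<x. w i)" if "x \<le> d" for m x
    using that sum.shift_bounds_nat_ivl[of "\<lambda>i. w (i mod d)" 0 "m*d" x]
    by (auto simp: add.commute lessThan_atLeast0 intro!: sum.cong)
  have split: "{..<n} = {..<q*d} \<union> {q*d..<q*d+r}"
    by (auto simp: q_def r_def intro: less_le_trans div_times_less_eq_dividend)
  have "(\<Sum>i<n. w (i mod d)) = (\<Sum>i<q*d. w (i mod d)) + (\<Sum>i\<in>{q*d..<q*d+r}. w (i mod d))"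
    unfolding split by (rule sum.union_disjoint) auto
  also have "(\<Sum>i<q*d. w (i mod d)) = (\<Sum>m<q. \<Sum>i\<in>{m*d..<m*d+d}. w (i mod d))"
    by (rule sum.nat_group[symmetric])
  also have "(\<Sum>i\<in>{q*d..<q*d+r}. w (i mod d)) = (\<Sum>i<r. w i)"
    using False by (intro period) (simp add: r_def)
  finally show ?thesis
    by (simp add: period q_def r_def)
qed simp

lemma card_cyclic_label_le:
  assumes "0 < d"
  shows "card {i\<in>{..<n}. cyclic_label d i = x} \<le> n div d + 1"
proof -
  let ?w = "\<lambda>y. if Suc y = x then 1 else (0::real)"
  have "real (card {i\<in>{..<n}. cyclic_label d i = x}) = (\<Sum>i<n. ?w (i mod d))"
    by (simp add: cyclic_label_def sum.If_cases Int_def)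
  also have "\<dots> = real (n div d) * (\<Sum>y<d. ?w y) + (\<Sum>y<n mod d. ?w y)"
    by (rule sum_lessThan_mod)
  also have "\<dots> \<le> real (n div d) * 1 + 1"
  proof -
    have "(\<Sum>y<m. ?w y) \<le> 1" for m
    proof -
      have "(\<Sum>y<m. ?w y) \<le> (\<Sum>y<m. if y = x - 1 then 1 else 0)"
        by (intro sum_mono) auto
      also have "\<dots> \<le> 1"
        by simp
      finally show ?thesis .
    qed
    then show ?thesis
      by (intro add_mono mult_left_mono) auto
  qed
  finally show ?thesis
    by simp
qed

lemma sylvester_cyclic_row_sum:
  assumes "0 < y" and "y < 2^t"
  shows "\<bar>\<Sum>i<n. sylvester t (cyclic_label (2^t - 1) i) y\<bar> \<le> real (n div (2^t - 1)) + real (2^t - 1)"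
proof -
  define d :: nat where "d = 2^t - 1"
  have two_pow: "(2::nat)^t = Suc d"
    using assms(2) by (simp add: d_def)
  have "(\<Sum>x<Suc d. sylvester t x y) = sylvester t 0 y + (\<Sum>x<d. sylvester t (Suc x) y)"
    by (rule sum.lessThan_Suc_shift)
  then have period: "(\<Sum>x<d. sylvester t (Suc x) y) = -1"
    using sylvester_row_sum[of y t] assms sylvester_commute[of t 0 y] by (simp add: two_pow)
  have "\<bar>\<Sum>x<n mod d. sylvester t (Suc x) y\<bar> \<le> (\<Sum>x<n mod d. \<bar>sylvester t (Suc x) y\<bar>)"
    by (rule sum_abs)
  also have "\<dots> \<le> real d"
    using assms two_pow by simp
  finally have rest: "\<bar>\<Sum>x<n mod d. sylvester t (Suc x) y\<bar> \<le> real d" .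
  have "(\<Sum>i<n. sylvester t (cyclic_label d i) y) = - real (n div d) + (\<Sum>x<n mod d. sylvester t (Suc x) y)"
    using sum_lessThan_mod[where w="\<lambda>x. sylvester t (Suc x) y" and n=n and d=d] period
    by (simp add: cyclic_label_def)
  then show ?thesis
    using rest unfolding d_def by linarith
qed

section \<open>The construction\<close>

definition part :: "nat \<Rightarrow> nat \<Rightarrow> nat set" where
  "part n i = {i*n..<i*n+n}"

(* Labels run cyclically through 1, ..., 2^t - 1, avoiding the constant row 0 of the matrix. *)
definition vertex_label :: "nat \<Rightarrow> nat \<Rightarrow> nat \<Rightarrow> nat" where
  "vertex_label n t v = cyclic_label (2^t - 1) (v mod n)"

definition vertex_sign :: "nat \<Rightarrow> nat \<Rightarrow> nat \<Rightarrow> real" where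
  "vertex_sign n b v = (if v mod n < b then -1 else 1)"

definition edge_sign :: "nat \<Rightarrow> nat \<Rightarrow> nat \<Rightarrow> nat \<Rightarrow> (nat \<Rightarrow> nat) \<Rightarrow> real" where
  "edge_sign k n t b f =
     sylvester t (vertex_label n t (f 1)) (vertex_label n t (f 2)) *
     (\<Prod>i\<in>{..<k} - {1, 2}. vertex_sign n b (f i))"

definition sign_edges :: "nat \<Rightarrow> nat \<Rightarrow> nat \<Rightarrow> nat \<Rightarrow> nat set set" where
  "sign_edges k n t b = {f ` {..<k} | f. f \<in> PiE {..<k} (part n) \<and> edge_sign k n t b f = 1}"

lemma part_eq_image: "part n i = (\<lambda>j. i*n + j) ` {..<n}"
proof (intro subset_antisym subsetI)
  fix v assume "v \<in> part n i"
  then show "v \<in> (\<lambda>j. i*n + j) ` {..<n}"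
    by (auto simp: part_def intro!: image_eqI[of _ _ "v - i*n"])
qed (auto simp: part_def)

lemma finite_part [simp]: "finite (part n i)"
  by (simp add: part_def)

lemma card_part [simp]: "card (part n i) = n"
  by (simp add: part_def)

lemma part_0: "part n 0 = {..<n}"
  by (auto simp: part_def)

lemma disjoint_family_part: "disjoint_family_on (part n) I"
proof -
  have "part n i \<inter> part n j = {}" if "i < j" for i j
  proof -
    have "i*n + n \<le> j*n"
      using that by (metis Suc_leI add.commute mult_Suc mult_le_mono1)
    then show ?thesis
      by (auto simp: part_def)
  qed
  then show ?thesis
    unfolding disjoint_family_on_def by (metis inf_commute linorder_neqE_nat)
qed

lemma sum_part: "(\<Sum>v\<in>part n i. F (v mod n)) = (\<Sum>j<n. F j)"
  unfolding part_eq_image by (subst sum.reindex) (auto simp: inj_on_def)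

lemma card_part_filter: "card {v\<in>part n i. P (v mod n)} = card {j\<in>{..<n}. P j}"
proof -
  have "{v\<in>part n i. P (v mod n)} = (\<lambda>j. i*n + j) ` {j\<in>{..<n}. P j}"
    unfolding part_eq_image by auto
  then show ?thesis
    by (simp add: card_image inj_on_def)
qed

lemma finite_verts_part: "finite (verts k (part n))"
  by (simp add: verts_def)

lemma abs_vertex_sign [simp]: "\<bar>vertex_sign n b v\<bar> = 1"
  by (simp add: vertex_sign_def)

lemma abs_edge_sign [simp]: "\<bar>edge_sign k n t b f\<bar> = 1"
  by (simp add: edge_sign_def abs_mult abs_prod)

lemma vertex_label_bounds:
  assumes "1 \<le> t"
  shows "0 < vertex_label n t v" "vertex_label n t v < 2^t"
proof -
  have "(2::nat)^1 \<le> 2^t"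
    using assms by (rule power_increasing) simp
  then have "v mod n mod (2^t - 1) < 2^t - 1"
    by (intro mod_less_divisor) simp
  then show "0 < vertex_label n t v" "vertex_label n t v < 2^t"
    by (auto simp: vertex_label_def cyclic_label_def)
qed

lemma kpartite_sign_edges: "kpartite_kgraph k (part n) (sign_edges k n t b)"
  unfolding kpartite_kgraph_def
proof (intro conjI ballI allI impI)
  fix e assume "e \<in> sign_edges k n t b"
  then obtain f where f: "f \<in> PiE {..<k} (part n)" "e = f ` {..<k}"
    by (auto simp: sign_edges_def)
  show "e \<subseteq> verts k (part n)"
    using f by (auto simp: verts_def)
  show "card e = k"
    using f transversal_inj_on[OF disjoint_family_part f(1)] by (simp add: card_image)
  show "card (e \<inter> part n i) \<le> 1" if "i < k" for i
    using f transversal_image_Int[OF disjoint_family_part f(1)] that by simp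
qed (use disjoint_family_part[of n "{..<k}"] in \<open>auto simp: disjoint_family_on_def\<close>)

lemma image_mem_sign_edges_iff:
  assumes "f \<in> PiE {..<k} (part n)"
  shows "f ` {..<k} \<in> sign_edges k n t b \<longleftrightarrow> edge_sign k n t b f = 1"
  using assms transversal_eq_of_image_eq[OF disjoint_family_part assms]
  by (auto simp: sign_edges_def)

lemma edge_sign_upd_vertex_sign:
  assumes "j < k" and "j \<noteq> 1" and "j \<noteq> 2"
  shows "edge_sign k n t b (f(j := v)) = vertex_sign n b v * vertex_sign n b (f j) * edge_sign k n t b f"
proof -
  define I where "I = {..<k} - {1, 2::nat}"
  have j: "j \<in> I" "finite I"
    using assms by (auto simp: I_def)
  have prod_upd: "(\<Prod>i\<in>I. vertex_sign n b ((f(j := v)) i)) = vertex_sign n b v * (\<Prod>i\<in>I - {j}. vertex_sign n b (f i))"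
    using j by (simp add: prod.remove)
  have "(\<Prod>i\<in>I. vertex_sign n b (f i)) = vertex_sign n b (f j) * (\<Prod>i\<in>I - {j}. vertex_sign n b (f i))"
    using j by (simp add: prod.remove)
  moreover have "vertex_sign n b (f j) * vertex_sign n b (f j) = 1"
    by (simp add: vertex_sign_def)
  ultimately show ?thesis
    using assms unfolding edge_sign_def I_def[symmetric] prod_upd by (simp add: mult_ac)
qed

lemma edge_sign_upd_1:
  "edge_sign k n t b (f(1 := v)) =
     sylvester t (vertex_label n t v) (vertex_label n t (f 2)) * (\<Prod>i\<in>{..<k} - {1, 2}. vertex_sign n b (f i))"
  unfolding edge_sign_def by (auto intro!: prod.cong)

lemma edge_sign_upd_2:
  "edge_sign k n t b (f(2 := v)) =
     sylvester t (vertex_label n t (f 1)) (vertex_label n t v) * (\<Prod>i\<in>{..<k} - {1, 2}. vertex_sign n b (f i))"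
  unfolding edge_sign_def by (auto intro!: prod.cong)

lemma sum_vertex_sign_part:
  assumes "b \<le> n"
  shows "(\<Sum>v\<in>part n j. vertex_sign n b v) = real n - 2 * real b"
proof -
  have "(\<Sum>v\<in>part n j. vertex_sign n b v) = (\<Sum>i<n. if i < b then -1 else 1)"
    unfolding vertex_sign_def by (rule sum_part)
  also have "\<dots> = - real (card ({..<n} \<inter> {i. i < b})) + real (card ({..<n} \<inter> - {i. i < b}))"
    by (simp add: sum.If_cases)
  also have "{..<n} \<inter> {i. i < b} = {..<b}"
    using assms by auto
  also have "{..<n} \<inter> - {i. i < b} = {b..<n}"
    by auto
  finally show ?thesis
    using assms by (simp add: of_nat_diff)
qed

lemma sum_sylvester_vertex_label_part:
  assumes "1 \<le> t"
  shows "\<bar>\<Sum>v\<in>part n j. sylvester t (vertex_label n t v) (vertex_label n t u)\<bar>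
    \<le> real (n div (2^t - 1)) + real (2^t - 1)"
proof -
  have "(\<Sum>v\<in>part n j. sylvester t (vertex_label n t v) (vertex_label n t u))
      = (\<Sum>i<n. sylvester t (cyclic_label (2^t - 1) i) (vertex_label n t u))"
    unfolding vertex_label_def[of n t v for v] by (rule sum_part)
  then show ?thesis
    using sylvester_cyclic_row_sum vertex_label_bounds[OF assms] by simp
qed

lemma sum_edge_sign_upd:
  assumes "j < k" and "1 \<le> t" and "b \<le> n"
    and "\<bar>real n - 2 * real b\<bar> \<le> c" and "real (n div (2^t - 1)) + real (2^t - 1) \<le> c"
  shows "\<bar>\<Sum>v\<in>part n j. edge_sign k n t b (f(j := v))\<bar> \<le> c"
proof -
  let ?P = "\<Prod>i\<in>{..<k} - {1, 2}. vertex_sign n b (f i)"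
  consider "j \<noteq> 1" "j \<noteq> 2" | "j = 1" | "j = 2"
    by blast
  then show ?thesis
  proof cases
    case 1
    then have "(\<Sum>v\<in>part n j. edge_sign k n t b (f(j := v)))
        = vertex_sign n b (f j) * edge_sign k n t b f * (\<Sum>v\<in>part n j. vertex_sign n b v)"
      using assms(1) by (simp add: edge_sign_upd_vertex_sign sum_distrib_left mult_ac)
    then show ?thesis
      using assms(3,4) by (simp add: abs_mult sum_vertex_sign_part)
  next
    case 2
    have "(\<Sum>v\<in>part n j. edge_sign k n t b (f(j := v)))
        = (\<Sum>v\<in>part n j. sylvester t (vertex_label n t v) (vertex_label n t (f 2))) * ?P"
      unfolding 2 edge_sign_upd_1 by (rule sum_distrib_right[symmetric])
    then show ?thesis
      using sum_sylvester_vertex_label_part[OF assms(2), where n=n and j=j and u="f 2"] assms(5)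
      by (simp add: abs_mult abs_prod)
  next
    case 3
    have "(\<Sum>v\<in>part n j. edge_sign k n t b (f(j := v)))
        = (\<Sum>v\<in>part n j. sylvester t (vertex_label n t v) (vertex_label n t (f 1))) * ?P"
      unfolding 3 edge_sign_upd_2 sylvester_commute[of t "vertex_label n t (f 1)"]
      by (rule sum_distrib_right[symmetric])
    then show ?thesis
      using sum_sylvester_vertex_label_part[OF assms(2), where n=n and j=j and u="f 1"] assms(5)
      by (simp add: abs_mult abs_prod)
  qed
qed

lemma deg_sign_edges_ge:
  assumes "0 < k" and "1 \<le> t" and "0 < n" and "b \<le> n"
    and "\<bar>real n - 2 * real b\<bar> \<le> 2 * \<mu> * real n"
    and "real (n div (2^t - 1)) + real (2^t - 1) \<le> 2 * \<mu> * real n"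
    and S: "S \<subseteq> verts k (part n)" "legal k (part n) S" "card S = k - 1"
  shows "(1/2 - \<mu>) * real n \<le> real (deg k (sign_edges k n t b) S)"
proof -
  let ?E = "sign_edges k n t b"
  have "\<Union>?E \<subseteq> verts k (part n)"
    using kpartite_sign_edges[of k n t b] unfolding kpartite_kgraph_def by blast
  then have fin_E: "finite (\<Union>?E)"
    using finite_verts_part by (rule finite_subset)
  have nonempty: "finite (part n i) \<and> part n i \<noteq> {}" for i
    using assms(3) by (auto simp: part_def)
  obtain j g where j: "j < k" and g: "g \<in> PiE {..<k} (part n)" and S_eq: "S = g ` ({..<k} - {j})"
    using legal_card_minus_one_transversalE[OF disjoint_family_part nonempty S assms(1)] .
  have "insert v S \<in> ?E" if "v \<in> part n j" "edge_sign k n t b (g(j := v)) = 1" for v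
  proof -
    have "g(j := v) \<in> PiE {..<k} (part n)"
      using g j that(1) by (auto simp: PiE_iff extensional_def)
    moreover have "(g(j := v)) ` {..<k} = insert v S"
      using j by (auto simp: S_eq image_iff)
    ultimately show ?thesis
      using image_mem_sign_edges_iff that(2) by metis
  qed
  then have sub: "{v\<in>part n j. edge_sign k n t b (g(j := v)) = 1} \<subseteq> {v\<in>part n j. insert v S \<in> ?E}"
    by blast
  have "(1/2 - \<mu>) * real (card (part n j)) \<le> real (card {v\<in>part n j. edge_sign k n t b (g(j := v)) = 1})"
    using sum_edge_sign_upd[OF j assms(2,4)] assms(5,6) by (intro card_pm_one_level_ge) auto
  also have "\<dots> \<le> real (card {v\<in>part n j. insert v S \<in> ?E})"
    using sub by (intro of_nat_mono card_mono) auto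
  also have "\<dots> \<le> real (deg k ?E S)"
    using card_extensions_le_deg[OF fin_E S(3) assms(1)] by simp
  finally show ?thesis
    by simp
qed

lemma partite_min_deg_sign_edges:
  assumes "0 < k" and "1 \<le> t" and "0 < n" and "b \<le> n"
    and "\<bar>real n - 2 * real b\<bar> \<le> 2 * \<mu> * real n"
    and "real (n div (2^t - 1)) + real (2^t - 1) \<le> 2 * \<mu> * real n"
  shows "(1/2 - \<mu>) * real n \<le> real (partite_min_deg k (part n) (sign_edges k n t b) (k - 1))"
proof -
  define g0 where "g0 = restrict (\<lambda>i. i*n) {..<k}"
  have "g0 \<in> PiE {..<k} (part n)"
    using assms(3) by (auto simp: g0_def part_def)
  note legal_g0 = transversal_minus_one_legal[OF disjoint_family_part this assms(1)]
  show ?thesis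
    by (rule partite_min_deg_ge[OF finite_verts_part legal_g0 deg_sign_edges_ge[OF assms]])
qed

lemma sum_edge_sign_PiE:
  assumes "3 \<le> k" and "\<And>i. i < k \<Longrightarrow> finite (X i)"
  shows "(\<Sum>f\<in>PiE {..<k} X. edge_sign k n t b f)
    = (\<Sum>u\<in>X 1. \<Sum>w\<in>X 2. sylvester t (vertex_label n t u) (vertex_label n t w)) *
      (\<Prod>i\<in>{..<k} - {1, 2}. \<Sum>v\<in>X i. vertex_sign n b v)"
proof -
  define I where "I = {..<k} - {1, 2::nat}"
  have k_eq: "{..<k} = insert 1 (insert 2 I)" "1 \<notin> insert 2 I" "2 \<notin> I"
    using assms(1) by (auto simp: I_def)
  have upd: "edge_sign k n t b (h(2 := w, 1 := u))
      = sylvester t (vertex_label n t u) (vertex_label n t w) * (\<Prod>i\<in>I. vertex_sign n b (h i))" for h u w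
    unfolding edge_sign_def I_def by (auto intro!: prod.cong)
  have "(\<Sum>f\<in>PiE {..<k} X. edge_sign k n t b f)
      = (\<Sum>u\<in>X 1. \<Sum>w\<in>X 2. \<Sum>h\<in>PiE I X. edge_sign k n t b (h(2 := w, 1 := u)))"
    unfolding k_eq(1) sum_PiE_insert[OF k_eq(2)] sum_PiE_insert[OF k_eq(3)] ..
  also have "\<dots> = (\<Sum>u\<in>X 1. \<Sum>w\<in>X 2. sylvester t (vertex_label n t u) (vertex_label n t w) *
      (\<Sum>h\<in>PiE I X. \<Prod>i\<in>I. vertex_sign n b (h i)))"
    by (simp only: upd sum_distrib_left)
  also have "(\<Sum>h\<in>PiE I X. \<Prod>i\<in>I. vertex_sign n b (h i)) = (\<Prod>i\<in>I. \<Sum>v\<in>X i. vertex_sign n b v)"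
    using assms(2) by (intro prod_sum_PiE[symmetric]) (auto simp: I_def)
  finally show ?thesis
    by (simp add: I_def sum_distrib_right)
qed

lemma card_vertex_label_part_le:
  assumes "1 \<le> t"
  shows "card {v\<in>part n i. vertex_label n t v = x} \<le> n div (2^t - 1) + 1"
proof -
  have "(2::nat)^1 \<le> 2^t"
    using assms by (rule power_increasing) simp
  then have "0 < (2::nat)^t - 1"
    by simp
  then show ?thesis
    unfolding vertex_label_def card_part_filter[where P="\<lambda>j. cyclic_label (2^t - 1) j = x"]
    by (rule card_cyclic_label_le)
qed

lemma sylvester_vertex_label_discrepancy:
  assumes "1 \<le> t" and "0 \<le> \<mu>" and "2^t * (real (n div (2^t - 1)) + 1)^2 \<le> \<mu>^2 * real n ^ 2"
    and "X \<subseteq> part n i" and "Y \<subseteq> part n j"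
  shows "\<bar>\<Sum>u\<in>X. \<Sum>w\<in>Y. sylvester t (vertex_label n t u) (vertex_label n t w)\<bar> \<le> \<mu> * real n ^ 2"
proof -
  let ?D = "\<Sum>u\<in>X. \<Sum>w\<in>Y. sylvester t (vertex_label n t u) (vertex_label n t w)"
  let ?q = "real (n div (2^t - 1) + 1)"
  have fibre: "card {u\<in>Z. vertex_label n t u = x} \<le> n div (2^t - 1) + 1" if "Z \<subseteq> part n l" for Z l x
    using card_mono[of "{v\<in>part n l. vertex_label n t v = x}" "{u\<in>Z. vertex_label n t u = x}"] that
      card_vertex_label_part_le[OF assms(1), of n l x] by fastforce
  have card_le: "real (card Z) \<le> real n" if "Z \<subseteq> part n l" for Z l
    using card_mono[OF finite_part that] by simp
  have "?D\<^sup>2 \<le> 2^t * (?q * real (card X)) * (?q * real (card Y))"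
    using assms(1,4,5) vertex_label_bounds(2)[OF assms(1)]
    by (intro sylvester_labelled_discrepancy fibre) (auto intro: finite_subset)
  also have "\<dots> \<le> 2^t * (?q * real n) * (?q * real n)"
    using card_le assms(4,5) by (intro mult_mono mult_left_mono) auto
  also have "\<dots> = (2^t * (real (n div (2^t - 1)) + 1)^2) * real n ^ 2"
    by (simp add: power2_eq_square ac_simps)
  also have "\<dots> \<le> (\<mu>^2 * real n ^ 2) * real n ^ 2"
    by (rule mult_right_mono[OF assms(3)]) simp
  also have "\<dots> = (\<mu> * real n ^ 2)\<^sup>2"
    by (simp add: power_mult_distrib power2_eq_square)
  finally show ?thesis
    using power2_le_imp_le[of "\<bar>?D\<bar>" "\<mu> * real n ^ 2"] assms(2) by simp
qed

lemma abs_prod_sum_vertex_sign_le: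
  assumes "3 \<le> k" and "\<forall>i<k. X i \<subseteq> part n i"
  shows "\<bar>\<Prod>i\<in>{..<k} - {1, 2}. \<Sum>v\<in>X i. vertex_sign n b v\<bar> \<le> real n ^ (k - 2)"
proof -
  have "\<bar>\<Prod>i\<in>{..<k} - {1, 2}. \<Sum>v\<in>X i. vertex_sign n b v\<bar> \<le> (\<Prod>i\<in>{..<k} - {1, 2}. real n)"
    unfolding abs_prod
  proof (rule prod_mono)
    fix i assume "i \<in> {..<k} - {1, 2}"
    then have "\<bar>\<Sum>v\<in>X i. vertex_sign n b v\<bar> \<le> real (card (X i))" "card (X i) \<le> n"
      using sum_abs[of "vertex_sign n b" "X i"] assms(2) card_mono[of "part n i" "X i"] by auto
    then show "0 \<le> \<bar>\<Sum>v\<in>X i. vertex_sign n b v\<bar> \<and> \<bar>\<Sum>v\<in>X i. vertex_sign n b v\<bar> \<le> real n"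
      by linarith
  qed
  also have "\<dots> = real n ^ (k - 2)"
    using assms(1) by (simp add: card_Diff_subset numeral_2_eq_2)
  finally show ?thesis .
qed

lemma card_verts_part_ge:
  assumes "0 < k"
  shows "n \<le> card (verts k (part n))"
  using card_mono[OF finite_verts_part, of "part n 0" k] assms
  by (auto simp: verts_def intro!: bexI[of _ 0])

lemma dense_sign_edges:
  assumes "3 \<le> k" and "1 \<le> t" and "0 \<le> \<mu>"
    and "2^t * (real (n div (2^t - 1)) + 1)^2 \<le> \<mu>^2 * real n ^ 2"
  shows "dense k (part n) (sign_edges k n t b) (1/2) \<mu>"
  unfolding dense_def
proof (intro allI impI)
  fix X assume X: "\<forall>i<k. X i \<subseteq> part n i"
  let ?P = "PiE {..<k} X" and ?E = "sign_edges k n t b"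
  have fin: "finite (X i)" if "i < k" for i
    using X that finite_part finite_subset by blast
  then have fin_P: "finite ?P"
    by (intro finite_PiE) auto
  have "f ` {..<k} \<in> ?E \<longleftrightarrow> edge_sign k n t b f = 1" if "f \<in> ?P" for f
    using that X by (intro image_mem_sign_edges_iff) (auto simp: PiE_iff)
  then have "{f\<in>?P. f ` {..<k} \<in> ?E} = {f\<in>?P. edge_sign k n t b f = 1}"
    by blast
  then have count: "2 * real (e_count k ?E X) = real (card ?P) + (\<Sum>f\<in>?P. edge_sign k n t b f)"
    using card_pm_one_level[OF fin_P, of "edge_sign k n t b" 1] by (simp add: e_count_def)
  have D: "\<bar>\<Sum>u\<in>X 1. \<Sum>w\<in>X 2. sylvester t (vertex_label n t u) (vertex_label n t w)\<bar> \<le> \<mu> * real n ^ 2"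
    using X assms(1) by (intro sylvester_vertex_label_discrepancy[OF assms(2-4), where i=1 and j=2]) auto
  have factor: "(\<Sum>f\<in>?P. edge_sign k n t b f)
      = (\<Sum>u\<in>X 1. \<Sum>w\<in>X 2. sylvester t (vertex_label n t u) (vertex_label n t w)) *
        (\<Prod>i\<in>{..<k} - {1, 2}. \<Sum>v\<in>X i. vertex_sign n b v)"
    by (rule sum_edge_sign_PiE[OF assms(1) fin])
  have "\<bar>\<Sum>f\<in>?P. edge_sign k n t b f\<bar> \<le> \<mu> * real n ^ 2 * real n ^ (k - 2)"
    unfolding factor abs_mult using D abs_prod_sum_vertex_sign_le[OF assms(1) X] assms(3)
    by (intro mult_mono) auto
  also have "\<dots> = \<mu> * real n ^ k"
  proof -
    have "2 + (k - 2) = k"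
      using assms(1) by simp
    then show ?thesis
      by (metis mult.assoc power_add)
  qed
  also have "\<dots> \<le> \<mu> * real (card (verts k (part n))) ^ k"
    using card_verts_part_ge[of k n] assms(1,3) by (intro mult_left_mono power_mono) auto
  finally have "\<bar>\<Sum>f\<in>?P. edge_sign k n t b f\<bar> \<le> \<mu> * real (card (verts k (part n))) ^ k" .
  moreover have "real (card ?P) = (\<Prod>i<k. real (card (X i)))"
    by (simp add: card_PiE)
  ultimately show "1/2 * (\<Prod>i<k. real (card (X i))) - \<mu> * real (card (verts k (part n))) ^ k
      \<le> real (e_count k ?E X)"
    using count by linarith
qed

lemma negative_vertex_exchange:
  assumes "0 < k" and "b \<le> n"
    and "e \<in> sign_edges k n t b" and "insert u' (e - {u}) \<in> sign_edges k n t b"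
    and "u \<in> e" and "u < b"
  shows "u' < b"
proof -
  note disj = disjoint_family_part[of n "{..<k}"]
  obtain f where f: "f \<in> PiE {..<k} (part n)" "e = f ` {..<k}" "edge_sign k n t b f = 1"
    using assms(3) by (auto simp: sign_edges_def)
  obtain f' where f': "f' \<in> PiE {..<k} (part n)" "insert u' (e - {u}) = f' ` {..<k}"
      "edge_sign k n t b f' = 1"
    using assms(4) unfolding sign_edges_def by blast
  have "u \<in> part n 0"
    using assms(2,6) by (simp add: part_0)
  then have "u \<in> {f 0}"
    using transversal_image_Int[OF disj f(1), of 0] assms(1,5) f(2) by blast
  then have f0: "f 0 = u"
    by simp
  have "f' = f(0 := u')"
    using transversal_exchange[OF disj f(1) f'(1)] assms(1) f(2) f'(2) f0 by simp
  then have "vertex_sign n b u' * vertex_sign n b u = 1"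
    using edge_sign_upd_vertex_sign[where j=0 and f=f and v=u' and n=n and t=t and b=b, OF assms(1)]
      f(3) f'(3) f0 by simp
  moreover have "u' < n"
    using PiE_mem[OF f'(1), of 0] \<open>f' = f(0 := u')\<close> assms(1) by (simp add: part_0)
  ultimately show ?thesis
    using assms(2,6) by (auto simp: vertex_sign_def split: if_splits)
qed

lemma Kk_copy_class_below:
  assumes "0 < k" and "b \<le> n" and copy: "Kk_copy k m (part n) (sign_edges k n t b) W F"
    and bij: "bij_betw \<phi> (Kk_verts k m) W"
    and edges: "\<forall>e. e \<subseteq> Kk_verts k m \<longrightarrow> (e \<in> Kk_edges k m \<longleftrightarrow> \<phi> ` e \<in> F)"
    and "c < k" "a < m" "a' < m" "\<phi> (c, a) < b"
  shows "\<phi> (c, a') < b"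
proof -
  define T where "T x = (\<lambda>i. (i, if i = c then x else 0)) ` {..<k}" for x :: nat
  have T_sub: "T x \<subseteq> Kk_verts k m" if "x < m" for x
    using that assms(7) by (auto simp: T_def Kk_verts_def)
  have "T x \<in> Kk_edges k m" if "x < m" for x
    using that assms(7) unfolding Kk_edges_def T_def
    by (intro CollectI exI[of _ "\<lambda>i. if i = c then x else 0"]) auto
  then have T_edge: "\<phi> ` T x \<in> sign_edges k n t b" if "x < m" for x
    using edges T_sub[OF that] that copy by (auto simp: Kk_copy_def)
  have inj: "inj_on \<phi> (Kk_verts k m)"
    using bij by (simp add: bij_betw_def)
  have in_K: "(c, a) \<in> Kk_verts k m" "(c, a') \<in> Kk_verts k m"
    using assms(6-8) by (auto simp: Kk_verts_def)
  have "T a' = insert (c, a') (T a - {(c, a)})"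
    using assms(6) by (auto simp: T_def image_iff)
  then have "\<phi> ` T a' = insert (\<phi> (c, a')) (\<phi> ` T a - {\<phi> (c, a)})"
    using inj_on_image_set_diff[OF inj, of "T a" "{(c, a)}"] T_sub[OF assms(7)] in_K by auto
  moreover have "(c, a) \<in> T a"
    unfolding T_def by (rule image_eqI[of _ _ c]) (use assms(6) in auto)
  then have "\<phi> (c, a) \<in> \<phi> ` T a"
    by (rule imageI)
  ultimately show ?thesis
    using negative_vertex_exchange[OF assms(1,2) T_edge[OF assms(7)] _ _ assms(9)] T_edge[OF assms(8)]
    by simp
qed

lemma Kk_copy_dvd_card_below:
  assumes "0 < k" and "0 < m" and "b \<le> n" and copy: "Kk_copy k m (part n) (sign_edges k n t b) W F"
  shows "m dvd card (W \<inter> {..<b})"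
proof -
  obtain \<phi> where bij: "bij_betw \<phi> (Kk_verts k m) W"
    and edges: "\<forall>e. e \<subseteq> Kk_verts k m \<longrightarrow> (e \<in> Kk_edges k m \<longleftrightarrow> \<phi> ` e \<in> F)"
    using copy unfolding Kk_copy_def by blast
  note same_class = Kk_copy_class_below[OF assms(1,3) copy bij edges]
  define C where "C = {c\<in>{..<k}. \<phi> (c, 0) < b}"
  have "W \<inter> {..<b} = \<phi> ` (C \<times> {..<m})"
  proof (intro subset_antisym subsetI)
    fix w assume "w \<in> W \<inter> {..<b}"
    then obtain c a where "c < k" "a < m" "w = \<phi> (c, a)" "\<phi> (c, a) < b"
      using bij_betw_imp_surj_on[OF bij] by (auto simp: Kk_verts_def)
    then show "w \<in> \<phi> ` (C \<times> {..<m})"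
      using same_class[of c a 0] assms(2) by (auto simp: C_def)
  next
    fix w assume "w \<in> \<phi> ` (C \<times> {..<m})"
    then obtain c a where "c < k" "a < m" "\<phi> (c, 0) < b" "w = \<phi> (c, a)"
      by (auto simp: C_def)
    then show "w \<in> W \<inter> {..<b}"
      using same_class[of c 0 a] bij_betw_imp_surj_on[OF bij] assms(2) by (auto simp: Kk_verts_def)
  qed
  moreover have "inj_on \<phi> (C \<times> {..<m})"
    using bij by (rule inj_on_subset[OF bij_betw_imp_inj_on]) (auto simp: C_def Kk_verts_def)
  ultimately show ?thesis
    by (simp add: card_image card_cartesian_product)
qed

lemma no_Kk_factor_sign_edges:
  assumes "0 < k" and "0 < m" and "b \<le> n" and "\<not> m dvd b"
  shows "\<not> has_Kk_factor k m (part n) (sign_edges k n t b)"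
proof
  assume "has_Kk_factor k m (part n) (sign_edges k n t b)"
  then obtain \<F> where copies: "\<forall>(W, F)\<in>\<F>. Kk_copy k m (part n) (sign_edges k n t b) W F"
    and disj: "\<forall>A\<in>\<F>. \<forall>B\<in>\<F>. A \<noteq> B \<longrightarrow> fst A \<inter> fst B = {}"
    and cover: "(\<Union>A\<in>\<F>. fst A) = verts k (part n)"
    unfolding has_Kk_factor_def by blast
  have "m dvd card {..<b}"
  proof (rule dvd_card_of_partition[OF finite_verts_part])
    show "\<Union>(fst ` \<F>) = verts k (part n)"
      using cover by simp
    show "pairwise disjnt (fst ` \<F>)"
    proof (rule pairwiseI)
      fix W W' assume "W \<in> fst ` \<F>" "W' \<in> fst ` \<F>" "W \<noteq> W'"
      then obtain A A' where "A \<in> \<F>" "A' \<in> \<F>" "W = fst A" "W' = fst A'" "A \<noteq> A'"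
        by blast
      then show "disjnt W W'"
        using disj by (simp add: disjnt_def)
    qed
    show "{..<b} \<subseteq> verts k (part n)"
      using assms(1,3) by (auto simp: verts_def part_0)
    show "m dvd card (W \<inter> {..<b})" if "W \<in> fst ` \<F>" for W
      using that copies Kk_copy_dvd_card_below[OF assms(1-3)] by fastforce
  qed
  then show False
    using assms(4) by simp
qed

section \<open>Choice of parameters\<close>

lemma exists_sylvester_order:
  fixes \<mu> :: real
  assumes "0 < \<mu>"
  obtains t :: nat where "1 \<le> t" "16 / \<mu>^2 \<le> 2^t" "1 / \<mu> \<le> 2^t - 1"
proof -
  obtain t0 where t0: "16 / \<mu>^2 + 1 / \<mu> + 1 < (2::real)^t0"
    using real_arch_pow[of 2 "16 / \<mu>^2 + 1 / \<mu> + 1"] by auto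
  have "(2::real)^t0 \<le> 2^Suc t0"
    by simp
  moreover have "0 \<le> 16 / \<mu>^2" "0 \<le> 1 / \<mu>"
    using assms by simp_all
  ultimately show ?thesis
    using t0 by (intro that[of "Suc t0"]) linarith+
qed

lemma sylvester_density_parameter:
  assumes "0 < \<mu>" and "1 \<le> t" and "16 / \<mu>^2 \<le> 2^t" and "2^t - 1 \<le> n"
  shows "2^t * (real (n div (2^t - 1)) + 1)^2 \<le> \<mu>^2 * real n ^ 2"
proof -
  define d :: nat where "d = 2^t - 1"
  define q where "q = n div d"
  define N :: real where "N = 2^t"
  have "(2::nat)^1 \<le> 2^t"
    using assms(2) by (rule power_increasing) simp
  then have d: "1 \<le> d" "N = real d + 1"
    by (simp_all add: d_def N_def of_nat_diff)
  have "d div d \<le> q"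
    unfolding q_def using assms(4) d_def by (intro div_le_mono) simp
  then have q: "1 \<le> real q"
    using d by simp
  have qd: "real q * real d \<le> real n"
    using div_times_less_eq_dividend[of n d] by (simp add: q_def flip: of_nat_mult)
  have "(real q + 1) * N \<le> (2 * real q) * (2 * real d)"
    using q d by (intro mult_mono) auto
  also have "\<dots> \<le> 4 * real n"
    using qd by simp
  finally have "((real q + 1) * N)^2 \<le> (4 * real n)^2"
    by (rule power_mono) (use q d in simp)
  then have sq: "(real q + 1)^2 * N^2 \<le> 16 * real n ^ 2"
    by (simp add: power_mult_distrib)
  have mu: "16 \<le> \<mu>^2 * N"
    using assms(1,3) by (simp add: N_def pos_divide_le_eq mult.commute)
  have "16 * (N * (real q + 1)^2) \<le> (\<mu>^2 * N) * (N * (real q + 1)^2)"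
    using d by (intro mult_right_mono[OF mu]) simp
  also have "\<dots> = \<mu>^2 * ((real q + 1)^2 * N^2)"
    by (simp add: power2_eq_square mult_ac)
  also have "\<dots> \<le> \<mu>^2 * (16 * real n ^ 2)"
    by (rule mult_left_mono[OF sq]) simp
  finally show ?thesis
    by (simp add: q_def d_def N_def)
qed

lemma sylvester_codegree_parameter:
  assumes "0 < \<mu>" and "1 / \<mu> \<le> real d" and "real d \<le> \<mu> * real n"
  shows "real (n div d) + real d \<le> 2 * \<mu> * real n"
proof -
  have "1 \<le> \<mu> * real d"
    using assms(1,2) by (simp add: field_simps)
  then have "real (n div d) \<le> \<mu> * (real (n div d) * real d)"
    using mult_left_mono[of 1 "\<mu> * real d" "real (n div d)"] by (simp add: mult_ac)
  also have "\<dots> \<le> \<mu> * real n"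
    using assms(1) div_times_less_eq_dividend[of n d] by (simp flip: of_nat_mult)
  finally show ?thesis
    using assms(3) by simp
qed

lemma exists_near_half_not_dvd:
  assumes "2 \<le> m" and "1 \<le> n"
  obtains b :: nat where "b \<le> n" "\<not> m dvd b" "\<bar>real n - 2 * real b\<bar> \<le> 2"
proof -
  have "n = 2 * (n div 2) + n mod 2" "n mod 2 \<le> 1"
    by simp_all
  then have half: "real n = 2 * real (n div 2) + real (n mod 2)" "real (n mod 2) \<le> 1"
    by (metis of_nat_add of_nat_mult of_nat_numeral, simp)
  show ?thesis
  proof (cases "m dvd n div 2")
    case True
    have "\<not> m dvd n div 2 + 1"
    proof
      assume "m dvd n div 2 + 1"
      then have "m dvd 1"
        using True by (metis dvd_add_right_iff)
      then show False
        using assms(1) by simp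
    qed
    then show ?thesis
      using assms(2) half by (intro that[of "n div 2 + 1"]) auto
  next
    case False
    then show ?thesis
      using half by (intro that[of "n div 2"]) auto
  qed
qed

lemma exists_dense_high_codegree_without_Kk_factor:
  fixes \<mu> :: real
  assumes "3 \<le> k" and "2 \<le> m" and "0 < \<mu>" and "1 \<le> t"
    and "16 / \<mu>^2 \<le> 2^t" and "1 / \<mu> \<le> 2^t - 1"
    and "2^t - 1 \<le> n" and "real (2^t - 1) \<le> \<mu> * real n" and "1 \<le> \<mu> * real n"
  shows "\<exists>(V :: nat \<Rightarrow> nat set) (E :: nat set set).
           kpartite_kgraph k V E \<and> (\<forall>i<k. card (V i) = n) \<and>
           dense k V E (1/2) \<mu> \<and>
           real (partite_min_deg k V E (k - 1)) \<ge> (1/2 - \<mu>) * real n \<and>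
           \<not> has_Kk_factor k m V E"
proof -
  have "(2::nat)^1 \<le> 2^t"
    using assms(4) by (rule power_increasing) simp
  then have d: "real (2^t - 1) = 2^t - 1" "1 \<le> n"
    using assms(7) by (simp_all add: of_nat_diff)
  obtain b where b: "b \<le> n" "\<not> m dvd b" "\<bar>real n - 2 * real b\<bar> \<le> 2"
    using exists_near_half_not_dvd[OF assms(2) d(2)] by blast
  have half: "\<bar>real n - 2 * real b\<bar> \<le> 2 * \<mu> * real n"
    using b(3) assms(9) by linarith
  have codegree: "real (n div (2^t - 1)) + real (2^t - 1) \<le> 2 * \<mu> * real n"
    using assms(6) d(1) by (intro sylvester_codegree_parameter[OF assms(3) _ assms(8)]) simp
  show ?thesis
  proof (intro exI conjI)
    show "kpartite_kgraph k (part n) (sign_edges k n t b)" "\<forall>i<k. card (part n i) = n"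
      by (simp_all add: kpartite_sign_edges)
    show "dense k (part n) (sign_edges k n t b) (1/2) \<mu>"
      using assms(3) sylvester_density_parameter[OF assms(3-5,7)]
      by (intro dense_sign_edges[OF assms(1,4)]) simp_all
    show "(1/2 - \<mu>) * real n \<le> real (partite_min_deg k (part n) (sign_edges k n t b) (k - 1))"
      using assms(1) d(2) by (intro partite_min_deg_sign_edges[OF _ assms(4) _ b(1) half codegree]) auto
    show "\<not> has_Kk_factor k m (part n) (sign_edges k n t b)"
      using assms(1,2) b(1,2) by (intro no_Kk_factor_sign_edges) auto
  qed
qed

theorem theorem1p2:
  fixes k m :: nat and \<mu> :: real
  assumes "k \<ge> 3" and "m \<ge> 2" and "\<mu> > 0"
  shows "\<exists>n0::nat. \<forall>n\<ge>n0. \<exists>(V :: nat \<Rightarrow> nat set) (E :: nat set set).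
           kpartite_kgraph k V E \<and> (\<forall>i<k. card (V i) = n) \<and>
           dense k V E (1/2) \<mu> \<and>
           real (partite_min_deg k V E (k - 1)) \<ge> (1/2 - \<mu>) * real n \<and>
           \<not> has_Kk_factor k m V E"
proof -
  obtain t where t: "1 \<le> t" "16 / \<mu>^2 \<le> 2^t" "1 / \<mu> \<le> 2^t - 1"
    using exists_sylvester_order[OF assms(3)] .
  define d :: nat where "d = 2^t - 1"
  obtain n0 :: nat where n0: "real d + real d / \<mu> + 1 / \<mu> \<le> real n0"
    using real_arch_simple by blast
  have "0 \<le> real d / \<mu>" "0 \<le> 1 / \<mu>"
    using assms(3) by simp_all
  then have "real d \<le> real n \<and> real d / \<mu> \<le> real n \<and> 1 / \<mu> \<le> real n" if "n0 \<le> n" for n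
    using n0 that by linarith
  then have "d \<le> n \<and> real d \<le> \<mu> * real n \<and> 1 \<le> \<mu> * real n" if "n0 \<le> n" for n
    using that assms(3) by (simp add: pos_divide_le_eq mult.commute)
  then show ?thesis
    using exists_dense_high_codegree_without_Kk_factor[OF assms t] unfolding d_def by blast
qed

end
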